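(* Let $n\ge0$ and let $w,u\in S_n$ be such that $\operatorname{Des}(u)\subseteq\operatorname{LRM}'(w)$. Then $uw\le_{\mathrm{lex}}w$.
   Context: $S_n$ is the symmetric group on $[n]=\{1,\dots,n\}$, with product $(uw)(i)=u(w(i))$. $\operatorname{Des}(u)=\{i\in[n-1]:u(i)>u(i+1)\}$. The set of left-to-right minima of $w\in S_n$ is $\operatorname{LRM}(w)=\{i\in[n]: w(k)>i \text{ for all } k<w^{-1}(i)\}$ (the entries smaller than all entries to their left in the one-line notation $w(1)w(2)\cdots w(n)$), and $\operatorname{LRM}'(w)=\{\ell-1:\ell\in\operatorname{LRM}(w),\ \ell>1\}\subseteq[n-1]$. The relation $\le_{\mathrm{lex}}$ compares permutations by lexicographic comparison of their one-line notations $(\sigma(1),\dots,\sigma(n))$. *)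

theory Defs
  imports "HOL-Combinatorics.Permutations"
begin

text \<open>Permutations of [n] = {1..n} are functions nat => nat with w permutes {1..n}
  (identity outside {1..n}). Product (u w)(i) = u (w i), i.e. u o w.\<close>

definition Des :: "nat \<Rightarrow> (nat \<Rightarrow> nat) \<Rightarrow> nat set" where
  "Des n u = {i \<in> {1..n-1}. u i > u (Suc i)}"

definition LRM :: "nat \<Rightarrow> (nat \<Rightarrow> nat) \<Rightarrow> nat set" where
  "LRM n w = {i \<in> {1..n}. \<forall>k. 1 \<le> k \<and> k < inv w i \<longrightarrow> w k > i}"

definition LRM' :: "nat \<Rightarrow> (nat \<Rightarrow> nat) \<Rightarrow> nat set" where
  "LRM' n w = {l - 1 | l. l \<in> LRM n w \<and> l > 1}"

definition lex_le :: "nat \<Rightarrow> (nat \<Rightarrow> nat) \<Rightarrow> (nat \<Rightarrow> nat) \<Rightarrow> bool" where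
  "lex_le n s t \<longleftrightarrow> (\<forall>i\<in>{1..n}. s i = t i) \<or>
     (\<exists>k\<in>{1..n}. (\<forall>i\<in>{1..<k}. s i = t i) \<and> s k < t k)"

end

theory Submission
  imports Defs
begin

text \<open>Let k be the first position moved by u \<circ> w and v = w k. Every left-to-right minimum
  l > v of w sits before position k, so u fixes it. If u v > v, then u x \<ge> x propagates from
  v up to n: at a step x - 1 \<rightarrow> x with x not a left-to-right minimum, x - 1 is not a descent
  of u. A permutation that does not decrease any element of the final segment {v..n} must
  map it onto itself and hence fix its least element v, a contradiction. So u v < v.\<close>

lemma permutes_fixed_if_nondecreasing_above:
  fixes u :: "'a::linorder \<Rightarrow> 'a"
  assumes u: "u permutes S" and "finite S"
    and nondecr: "\<forall>x\<in>S. v \<le> x \<longrightarrow> x \<le> u x"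
  shows "u v = v"
proof (cases "v \<in> S")
  case False
  then show ?thesis by (rule permutes_not_in[OF u])
next
  case True
  define T where "T = {x\<in>S. v \<le> x}"
  have "u ` T \<subseteq> T"
    using nondecr by (auto simp: T_def permutes_in_image[OF u] intro: order_trans)
  moreover have "inj_on u T"
    using permutes_inj[OF u] by (rule inj_on_subset) simp
  ultimately have "u ` T = T"
    using \<open>finite S\<close> by (intro endo_inj_surj) (auto simp: T_def)
  moreover have "v \<in> T"
    using True by (simp add: T_def)
  ultimately have "v \<in> u ` T"
    by simp
  then obtain x where "x \<in> T" "u x = v"
    by auto
  with nondecr have "x = v"
    by (auto simp: T_def)
  with \<open>u x = v\<close> show ?thesis by simp
qed

lemma LRM_greater_occurs_earlier:
  assumes w: "w permutes {1..n}" and "l \<in> LRM n w" and "k \<in> {1..n}" and "w k < l"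
  shows "inv w l < k"
proof -
  have "inv w l \<noteq> k"
    using \<open>w k < l\<close> by (auto simp: permutes_inverses[OF w])
  moreover have "\<not> k < inv w l"
    using assms(2-4) by (auto simp: LRM_def)
  ultimately show ?thesis by simp
qed

lemma not_Des_if_Suc_not_LRM:
  assumes "Des n u \<subseteq> LRM' n w" and "Suc y \<notin> LRM n w"
  shows "y \<notin> Des n u"
  using assms by (auto simp: LRM'_def)

lemma ascent_if_not_Des:
  assumes "inj u" and "y \<in> {1..n-1}" and "y \<notin> Des n u"
  shows "u y < u (Suc y)"
proof -
  have "u y \<noteq> u (Suc y)"
    using \<open>inj u\<close> by (simp add: inj_eq)
  with assms(2,3) show ?thesis by (auto simp: Des_def)
qed

lemma first_moved_value_decreases:
  assumes w: "w permutes {1..n}" and u: "u permutes {1..n}"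
    and des: "Des n u \<subseteq> LRM' n w"
    and k: "k \<in> {1..n}" and before: "\<forall>i\<in>{1..<k}. u (w i) = w i"
    and moved: "u (w k) \<noteq> w k"
  shows "u (w k) < w k"
proof (rule ccontr)
  define v where "v = w k"
  assume "\<not> u (w k) < w k"
  then have v_le: "v \<le> u v" by (simp add: v_def)
  have v: "v \<in> {1..n}"
    unfolding v_def permutes_in_image[OF w] by (rule k)
  have LRM_fixed: "u l = l" if l: "l \<in> LRM n w" "v < l" for l
  proof -
    have "l \<in> {1..n}"
      using l(1) by (simp add: LRM_def)
    then have "inv w l \<in> {1..n}"
      by (simp only: permutes_in_image[OF permutes_inv[OF w]])
    moreover have "inv w l < k"
      using LRM_greater_occurs_earlier[OF w l(1) k] l(2) by (simp add: v_def)
    ultimately have "u (w (inv w l)) = w (inv w l)"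
      using before by simp
    then show ?thesis by (simp add: permutes_inverses[OF w])
  qed
  have "x \<le> u x" if "v \<le> x" "x \<le> n" for x
    using that
  proof (induction x)
    case 0
    then show ?case by simp
  next
    case (Suc y)
    show ?case
    proof (cases "Suc y = v")
      case True
      then show ?thesis using v_le by simp
    next
      case False
      with Suc.prems have "v \<le> y" by simp
      with Suc have y_le: "y \<le> u y" by simp
      show ?thesis
      proof (cases "Suc y \<in> LRM n w")
        case True
        with LRM_fixed \<open>v \<le> y\<close> show ?thesis by simp
      next
        case False
        have "y \<in> {1..n-1}" using v \<open>v \<le> y\<close> Suc.prems by simp
        moreover from False have "y \<notin> Des n u" by (rule not_Des_if_Suc_not_LRM[OF des])
        ultimately have "u y < u (Suc y)" by (rule ascent_if_not_Des[OF permutes_inj[OF u]])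
        with y_le show ?thesis by simp
      qed
    qed
  qed
  then have "u v = v"
    by (intro permutes_fixed_if_nondecreasing_above[OF u]) auto
  with moved show False by (simp add: v_def)
qed

theorem lemma3p4:
  fixes n :: nat and w u :: "nat \<Rightarrow> nat"
  assumes "w permutes {1..n}" and "u permutes {1..n}"
    and "Des n u \<subseteq> LRM' n w"
  shows "lex_le n (u \<circ> w) w"
proof (cases "\<exists>k. k \<in> {1..n} \<and> u (w k) \<noteq> w k")
  case False
  then show ?thesis by (simp add: lex_le_def)
next
  case True
  then obtain k where k: "k \<in> {1..n}" "u (w k) \<noteq> w k"
    and least: "\<forall>i<k. \<not> (i \<in> {1..n} \<and> u (w i) \<noteq> w i)"
    unfolding exists_least_iff[of "\<lambda>k. k \<in> {1..n} \<and> u (w k) \<noteq> w k"] by blast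
  have before: "\<forall>i\<in>{1..<k}. u (w i) = w i"
    using least k(1) by auto
  have "u (w k) < w k"
    using first_moved_value_decreases[OF assms k(1) before k(2)] .
  with k(1) before show ?thesis
    by (auto simp: lex_le_def)
qed

end
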